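(* Let $k$ be a positive integer and $G$ a finite, simple, undirected, connected graph of order $n\ge2$. (a) If $O_{R,k}(G)=\mathcal{M}$, then $\dim_k(G)\le M_{R,k}(G)\le M'_{R,k}(G)\le\lfloor n/2\rfloor$, $M_{R,k+1}(G)\le M_{R,k}(G)$ and $M'_{R,k+1}(G)\le M'_{R,k}(G)$. (b) If $O_{R,k}(G)=\mathcal{B}$, then $B'_{R,k}(G)\le B_{R,k}(G)\le\lfloor n/2\rfloor$; moreover, for $k>1$, $B_{R,k}(G)\ge B_{R,k-1}(G)$ and $B'_{R,k}(G)\ge B'_{R,k-1}(G)$. (c) If $\mathrm{diam}(G)\in\{1,2\}$ or $k\ge\mathrm{diam}(G)-1$, then $M_{R,k}(G)=M_R(G)$ and $M'_{R,k}(G)=M'_R(G)$ if $O_R(G)=\mathcal{M}$, and $B_{R,k}(G)=B_R(G)$ and $B'_{R,k}(G)=B'_R(G)$ if $O_R(G)=\mathcal{B}$. (d) If $X$ is a pairing distance-$k$ resolving set of $G$ with $|\bigcup X|=2\dim_k(G)$, then $M_{R,k}(G)=M'_{R,k}(G)=\dim_k(G)$. (e) If $X$ is a quasi-pairing distance-$k$ resolving set of $G$ with $|\bigcup X|=2(\dim_k(G)-1)$ and $O_{R,k}(G)=\mathcal{N}$, then $N_{R,k}(G)=\dim_k(G)$.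
   Context: $d$ is the shortest-path distance, $\mathrm{diam}(G)$ the diameter, and $d_k(x,y)=\min\{d(x,y),k+1\}$. A set $S\subseteq V(G)$ is a distance-$k$ resolving set if for all distinct $x,y$ some $z\in S$ has $d_k(x,z)\ne d_k(y,z)$ (a resolving set if this holds with $d$); $\dim_k(G)$ is the minimum size of a distance-$k$ resolving set. In the Maker-Breaker distance-$k$ resolving game (MB$k$RG), Maker and Breaker alternately select a not-yet-chosen vertex; Maker wins if his selected vertices form a distance-$k$ resolving set, Breaker wins otherwise; in the $M$-game ($B$-game) Maker (Breaker) moves first. $O_{R,k}(G)=\mathcal{M}$ if Maker wins both games, $\mathcal{B}$ if Breaker wins both, $\mathcal{N}$ if the first player wins. The Maker-Breaker resolving game and its outcome $O_R(G)$ are defined the same way with resolving sets. If $O_{R,k}(G)=\mathcal{M}$, $M_{R,k}(G)$ ($M'_{R,k}(G)$) is the minimum number of moves Maker needs to win the $M$-game ($B$-game); if $O_{R,k}(G)=\mathcal{B}$, $B_{R,k}(G)$ ($B'_{R,k}(G)$) is the minimum number of moves Breaker needs to win the $M$-game ($B$-game); if $O_{R,k}(G)=\mathcal{N}$, $N_{R,k}(G)$ is the minimum number of moves for the first player (Maker) to win the $M$-game. $M_R,M'_R,B_R,B'_R$ are defined analogously for the resolving game. For a positive integer $\alpha$ and a family $X=\{\{u_1,w_1\},\dots,\{u_\alpha,w_\alpha\}\}$ of pairwise disjoint 2-subsets of $V(G)$, a transversal is a set $Z$ of size $\alpha$ meeting every $\{u_i,w_i\}$. $X$ is a pairing distance-$k$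 resolving set if every transversal is a distance-$k$ resolving set; $X$ is a quasi-pairing distance-$k$ resolving set if no transversal is a distance-$k$ resolving set but some $v\in V(G)-\bigcup X$ makes $Z\cup\{v\}$ a distance-$k$ resolving set for every transversal $Z$. *)

theory Defs
  imports Main "HOL-Library.Extended_Nat"
begin

definition simple_graph :: "'a set \<Rightarrow> ('a \<Rightarrow> 'a \<Rightarrow> bool) \<Rightarrow> bool" where
  "simple_graph V E \<longleftrightarrow> finite V \<and> (\<forall>x y. E x y \<longrightarrow> x \<in> V \<and> y \<in> V)
     \<and> (\<forall>x y. E x y \<longrightarrow> E y x) \<and> (\<forall>x. \<not> E x x)"

definition edge_rel :: "('a \<Rightarrow> 'a \<Rightarrow> bool) \<Rightarrow> ('a \<times> 'a) set" where
  "edge_rel E = {(u, v). E u v}"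

definition connected_graph :: "'a set \<Rightarrow> ('a \<Rightarrow> 'a \<Rightarrow> bool) \<Rightarrow> bool" where
  "connected_graph V E \<longleftrightarrow> (\<forall>x\<in>V. \<forall>y\<in>V. (x, y) \<in> (edge_rel E)\<^sup>*)"

definition gdist :: "('a \<Rightarrow> 'a \<Rightarrow> bool) \<Rightarrow> 'a \<Rightarrow> 'a \<Rightarrow> nat" where
  "gdist E x y = (LEAST n. (x, y) \<in> edge_rel E ^^ n)"

definition diam :: "'a set \<Rightarrow> ('a \<Rightarrow> 'a \<Rightarrow> bool) \<Rightarrow> nat" where
  "diam V E = Max {gdist E x y | x y. x \<in> V \<and> y \<in> V}"

definition gdist_k :: "('a \<Rightarrow> 'a \<Rightarrow> bool) \<Rightarrow> nat \<Rightarrow> 'a \<Rightarrow> 'a \<Rightarrow> nat" where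
  "gdist_k E k x y = min (gdist E x y) (k + 1)"

definition resolving_wrt :: "('a \<Rightarrow> 'a \<Rightarrow> nat) \<Rightarrow> 'a set \<Rightarrow> 'a set \<Rightarrow> bool" where
  "resolving_wrt d V S \<longleftrightarrow> S \<subseteq> V \<and>
     (\<forall>x\<in>V. \<forall>y\<in>V. x \<noteq> y \<longrightarrow> (\<exists>z\<in>S. d x z \<noteq> d y z))"

definition res_set :: "'a set \<Rightarrow> ('a \<Rightarrow> 'a \<Rightarrow> bool) \<Rightarrow> 'a set \<Rightarrow> bool" where
  "res_set V E S = resolving_wrt (gdist E) V S"

definition res_set_k :: "'a set \<Rightarrow> ('a \<Rightarrow> 'a \<Rightarrow> bool) \<Rightarrow> nat \<Rightarrow> 'a set \<Rightarrow> bool" where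
  "res_set_k V E k S = resolving_wrt (gdist_k E k) V S"

definition dim_k :: "'a set \<Rightarrow> ('a \<Rightarrow> 'a \<Rightarrow> bool) \<Rightarrow> nat \<Rightarrow> nat" where
  "dim_k V E k = Min {card S | S. res_set_k V E k S}"

text \<open>Positions: M = Maker's vertices, B = Breaker's vertices, p = True iff it is
  Maker's turn. The fuel argument n only ensures termination; it is instantiated
  with card V, which is the maximal number of remaining moves.\<close>
primrec maker_wins_from ::
  "('a set \<Rightarrow> bool) \<Rightarrow> 'a set \<Rightarrow> nat \<Rightarrow> 'a set \<Rightarrow> 'a set \<Rightarrow> bool \<Rightarrow> bool" where
  "maker_wins_from W V 0 M B p = W M"
| "maker_wins_from W V (Suc n) M B p =
    (if V - (M \<union> B) = {} then W M
     else if p then (\<exists>v \<in> V - (M \<union> B). maker_wins_from W V n (insert v M) B False)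
     else (\<forall>v \<in> V - (M \<union> B). maker_wins_from W V n M (insert v B) True))"

text \<open>Maker wins the game (M-game if maker_first, B-game otherwise).\<close>
definition maker_wins :: "('a set \<Rightarrow> bool) \<Rightarrow> 'a set \<Rightarrow> bool \<Rightarrow> bool" where
  "maker_wins W V maker_first = maker_wins_from W V (card V) {} {} maker_first"

datatype outcome = OutM | OutB | OutN | OutP

text \<open>Outcome: M (Maker wins both games), B (Breaker wins both), N (first player
  wins), P (second player wins; never happens for these games).\<close>
definition game_outcome :: "('a set \<Rightarrow> bool) \<Rightarrow> 'a set \<Rightarrow> outcome" where
  "game_outcome W V =
    (if maker_wins W V True \<and> maker_wins W V False then OutM
     else if \<not> maker_wins W V True \<and> \<not> maker_wins W V False then OutB
     else if maker_wins W V True then OutN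
     else OutP)"

primrec maker_time ::
  "('a set \<Rightarrow> bool) \<Rightarrow> 'a set \<Rightarrow> nat \<Rightarrow> 'a set \<Rightarrow> 'a set \<Rightarrow> bool \<Rightarrow> enat" where
  "maker_time W V 0 M B p = (if W M then enat (card M) else \<infinity>)"
| "maker_time W V (Suc n) M B p =
    (if W M then enat (card M)
     else if V - (M \<union> B) = {} then \<infinity>
     else if p then Min ((\<lambda>v. maker_time W V n (insert v M) B False) ` (V - (M \<union> B)))
     else Max ((\<lambda>v. maker_time W V n M (insert v B) True) ` (V - (M \<union> B))))"

text \<open>Optimal number of Breaker moves until Breaker has won, i.e. until no
  completion of Maker's set can satisfy W (for monotone W: the set V - B of
  vertices not taken by Breaker fails W).\<close>
primrec breaker_time ::
  "('a set \<Rightarrow> bool) \<Rightarrow> 'a set \<Rightarrow> nat \<Rightarrow> 'a set \<Rightarrow> 'a set \<Rightarrow> bool \<Rightarrow> enat" where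
  "breaker_time W V 0 M B p = (if \<not> W (V - B) then enat (card B) else \<infinity>)"
| "breaker_time W V (Suc n) M B p =
    (if \<not> W (V - B) then enat (card B)
     else if V - (M \<union> B) = {} then \<infinity>
     else if p then Max ((\<lambda>v. breaker_time W V n (insert v M) B False) ` (V - (M \<union> B)))
     else Min ((\<lambda>v. breaker_time W V n M (insert v B) True) ` (V - (M \<union> B))))"

text \<open>M_W: Maker first (M-game); M'_W: Breaker first (B-game). Likewise for B.
  N_W (first player Maker wins the M-game) coincides with M_W.\<close>
definition M_val :: "('a set \<Rightarrow> bool) \<Rightarrow> 'a set \<Rightarrow> enat" where
  "M_val W V = maker_time W V (card V) {} {} True"
definition M'_val :: "('a set \<Rightarrow> bool) \<Rightarrow> 'a set \<Rightarrow> enat" where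
  "M'_val W V = maker_time W V (card V) {} {} False"
definition B_val :: "('a set \<Rightarrow> bool) \<Rightarrow> 'a set \<Rightarrow> enat" where
  "B_val W V = breaker_time W V (card V) {} {} True"
definition B'_val :: "('a set \<Rightarrow> bool) \<Rightarrow> 'a set \<Rightarrow> enat" where
  "B'_val W V = breaker_time W V (card V) {} {} False"
definition N_val :: "('a set \<Rightarrow> bool) \<Rightarrow> 'a set \<Rightarrow> enat" where
  "N_val W V = maker_time W V (card V) {} {} True"

definition pair_family :: "'a set \<Rightarrow> 'a set set \<Rightarrow> bool" where
  "pair_family V X \<longleftrightarrow> finite X \<and> card X \<ge> 1 \<and> (\<forall>p\<in>X. p \<subseteq> V \<and> card p = 2)
     \<and> (\<forall>p\<in>X. \<forall>q\<in>X. p \<noteq> q \<longrightarrow> p \<inter> q = {})"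

definition transversal :: "'a set set \<Rightarrow> 'a set \<Rightarrow> bool" where
  "transversal X Z \<longleftrightarrow> card Z = card X \<and> (\<forall>p\<in>X. Z \<inter> p \<noteq> {})"

definition pairing_res :: "'a set \<Rightarrow> ('a \<Rightarrow> 'a \<Rightarrow> bool) \<Rightarrow> nat \<Rightarrow> 'a set set \<Rightarrow> bool" where
  "pairing_res V E k X \<longleftrightarrow> pair_family V X \<and>
     (\<forall>Z. Z \<subseteq> V \<and> transversal X Z \<longrightarrow> res_set_k V E k Z)"

definition quasi_pairing_res :: "'a set \<Rightarrow> ('a \<Rightarrow> 'a \<Rightarrow> bool) \<Rightarrow> nat \<Rightarrow> 'a set set \<Rightarrow> bool" where
  "quasi_pairing_res V E k X \<longleftrightarrow> pair_family V X \<and>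
     (\<forall>Z. Z \<subseteq> V \<and> transversal X Z \<longrightarrow> \<not> res_set_k V E k Z) \<and>
     (\<exists>v \<in> V - \<Union>X. \<forall>Z. Z \<subseteq> V \<and> transversal X Z \<longrightarrow> res_set_k V E k (insert v Z))"

end

theory Submission
  imports Defs
begin

text \<open>
  Breaker's recursion is Maker's recursion for the dual goal \<open>S \<mapsto> \<not> W (V - S)\<close>
  with the roles of the two sets exchanged, so every statement about Maker values transfers
  to Breaker values. Moving first never hurts Maker, because Maker's optimal time can only grow
  when Breaker owns more vertices. A player who can win needs at most his share of the
  remaining moves, which gives the bound \<open>\<lfloor>n/2\<rfloor>\<close>. Every distance-\<open>k\<close> resolving set is
  distance-\<open>(k+1)\<close> resolving, so the values are monotone in \<open>k\<close>, and once
  \<open>diam \<le> k + 1\<close> the truncation of the distance is invisible. Finally, a pairing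
  (quasi-pairing) resolving set gives Maker a strategy: he answers every Breaker vertex in a pair
  he has not yet met with its partner and otherwise meets a new pair, so after \<open>|X|\<close> moves
  (plus the extra vertex) his set meets every pair and hence resolves; \<open>dim\<^sub>k\<close> is a lower
  bound because Maker's final set is resolving.
\<close>

section \<open>Maker-Breaker game values\<close>

lemma Min_image_mono:
  fixes f g :: "'a \<Rightarrow> 'b::linorder"
  assumes "finite A" "A \<noteq> {}" "\<And>x. x \<in> A \<Longrightarrow> f x \<le> g x"
  shows "Min (f ` A) \<le> Min (g ` A)"
proof -
  have "Min (f ` A) \<le> g x" if "x \<in> A" for x
    using assms that by (meson Min_le finite_imageI image_eqI order_trans)
  then show ?thesis using assms by simp
qed

lemma Max_image_mono:
  fixes f g :: "'a \<Rightarrow> 'b::linorder"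
  assumes "finite A" "A \<noteq> {}" "\<And>x. x \<in> A \<Longrightarrow> f x \<le> g x"
  shows "Max (f ` A) \<le> Max (g ` A)"
proof -
  have "f x \<le> Max (g ` A)" if "x \<in> A" for x
    using assms that by (meson Max_ge finite_imageI image_eqI order_trans)
  then show ?thesis using assms by simp
qed

lemma maker_time_Suc_ongoing:
  assumes "\<not> W M" and "V - (M \<union> B) \<noteq> {}"
  shows "maker_time W V (Suc n) M B p =
    (if p then MIN v\<in>V - (M \<union> B). maker_time W V n (insert v M) B False
     else MAX v\<in>V - (M \<union> B). maker_time W V n M (insert v B) True)"
  using assms by simp

lemma maker_time_Suc_fuel:
  assumes "finite V"
  shows "card (V - (M \<union> B)) \<le> n \<Longrightarrow> maker_time W V (Suc n) M B p = maker_time W V n M B p"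
proof (induction n arbitrary: M B p)
  case 0
  then show ?case using assms by simp
next
  case (Suc n)
  have eq: "maker_time W V (Suc n) M' B' q = maker_time W V n M' B' q"
    if "v \<in> V - (M \<union> B)" "M' \<union> B' = insert v (M \<union> B)" for v M' B' q
    using Suc that by simp
  then show ?case
    unfolding maker_time.simps(2)[of W V "Suc n" M B p] maker_time.simps(2)[of W V n M B p]
    by (intro if_cong refl arg_cong[where f=Min] arg_cong[where f=Max] image_cong)
      (auto simp: eq simp del: maker_time.simps)
qed

lemma breaker_time_eq_dual_maker_time:
  "breaker_time W V n M B p = maker_time (\<lambda>S. \<not> W (V - S)) V n B M (\<not> p)"
  by (induction n arbitrary: M B p) (simp_all add: Un_commute)

lemma maker_time_mono_breaker_set:
  assumes "finite V"
  shows "card (V - (M \<union> B)) \<le> n \<Longrightarrow> B \<subseteq> B' \<Longrightarrow> maker_time W V n M B p \<le> maker_time W V n M B' p"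
proof (induction n arbitrary: M B B' p)
  case 0
  then show ?case by simp
next
  case (Suc n)
  let ?F = "V - (M \<union> B)" and ?F' = "V - (M \<union> B')"
  have fin: "finite ?F" "finite ?F'" using assms by simp_all
  have F'F: "?F' \<subseteq> ?F" using Suc.prems(2) by auto
  have fuel: "card (V - (M' \<union> B'')) \<le> n" if "v \<in> ?F" "M' \<union> B'' = insert v (M \<union> B)" for v M' B''
    using Suc.prems(1) that assms by simp
  show ?case
  proof (cases "W M \<or> ?F' = {}")
    case True
    then show ?thesis by auto
  next
    case False
    then have nonempty: "?F \<noteq> {}" "?F' \<noteq> {}" and "\<not> W M" using F'F by auto
    show ?thesis
    proof (cases p)
      case True
      have "(MIN v\<in>?F. maker_time W V n (insert v M) B False) \<le> maker_time W V n (insert v M) B' False"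
        if v: "v \<in> ?F'" for v
      proof -
        have "v \<in> ?F" using v F'F by blast
        moreover have "maker_time W V n (insert v M) B False \<le> maker_time W V n (insert v M) B' False"
          using Suc.IH[OF fuel[OF \<open>v \<in> ?F\<close>]] Suc.prems(2) by simp
        ultimately show ?thesis using fin nonempty by (auto simp: Min_le_iff)
      qed
      then show ?thesis using True \<open>\<not> W M\<close> nonempty fin by simp
    next
      case False
      have "maker_time W V n M (insert v B) True \<le> (MAX w\<in>?F'. maker_time W V n M (insert w B') True)"
        if v: "v \<in> ?F" for v
      proof -
        obtain w where w: "w \<in> ?F'" "insert v B \<subseteq> insert w B'"
          using v nonempty(2) Suc.prems(2) by (cases "v \<in> B'") auto
        have "maker_time W V n M (insert v B) True \<le> maker_time W V n M (insert w B') True"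
          using Suc.IH[OF fuel[OF v]] w(2) by simp
        then show ?thesis using w(1) fin nonempty by (auto simp: Max_ge_iff)
      qed
      then show ?thesis using False \<open>\<not> W M\<close> nonempty fin by simp
    qed
  qed
qed

lemma le_maker_time:
  assumes "finite V" and "finite M" and "\<And>S. M \<subseteq> S \<Longrightarrow> finite S \<Longrightarrow> W S \<Longrightarrow> d \<le> card S"
  shows "enat d \<le> maker_time W V n M B p"
  using assms(2,3)
proof (induction n arbitrary: M B p)
  case 0
  then show ?case by simp
next
  case (Suc n)
  have "enat d \<le> maker_time W V n (insert v M) B q" "enat d \<le> maker_time W V n M (insert v B) q" for v q
    using Suc.prems by (auto intro!: Suc.IH)
  then show ?case using Suc.prems assms(1) by (cases p) (auto simp: Max_ge_iff)
qed

lemma card_le_maker_time: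
  "finite V \<Longrightarrow> finite M \<Longrightarrow> enat (card M) \<le> maker_time W V n M B p"
  by (rule le_maker_time) (auto intro: card_mono)

lemma maker_time_antimono_goal:
  assumes "finite V" and "finite M" and W_W': "\<And>S. W S \<Longrightarrow> W' S"
  shows "maker_time W' V n M B p \<le> maker_time W V n M B p"
  using assms(2)
proof (induction n arbitrary: M B p)
  case 0
  then show ?case using W_W'[of M] by simp
next
  case (Suc n)
  show ?case
  proof (cases "W' M \<and> \<not> W M")
    case True
    then have "maker_time W' V (Suc n) M B p = enat (card M)" by simp
    then show ?thesis using card_le_maker_time[OF assms(1) Suc.prems] by (simp del: maker_time.simps)
  next
    case False
    have IH: "maker_time W' V n (insert v M) B q \<le> maker_time W V n (insert v M) B q"
      "maker_time W' V n M (insert v B) q \<le> maker_time W V n M (insert v B) q" for v q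
      by (simp_all add: Suc.IH Suc.prems)
    show ?thesis
    proof (cases "W' M \<or> V - (M \<union> B) = {}")
      case True
      then show ?thesis using False W_W'[of M] by auto
    next
      case ongoing: False
      then have "\<not> W' M" "\<not> W M" using W_W' by blast+
      have ne: "V - (M \<union> B) \<noteq> {}" and fin: "finite (V - (M \<union> B))"
        using ongoing assms(1) by auto
      have "(MIN v\<in>V - (M \<union> B). maker_time W' V n (insert v M) B False)
          \<le> (MIN v\<in>V - (M \<union> B). maker_time W V n (insert v M) B False)"
        by (rule Min_image_mono[OF fin ne IH(1)])
      moreover have "(MAX v\<in>V - (M \<union> B). maker_time W' V n M (insert v B) True)
          \<le> (MAX v\<in>V - (M \<union> B). maker_time W V n M (insert v B) True)"
        by (rule Max_image_mono[OF fin ne IH(2)])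
      ultimately show ?thesis
        unfolding maker_time_Suc_ongoing[where W=W', OF \<open>\<not> W' M\<close> ne]
          maker_time_Suc_ongoing[where W=W, OF \<open>\<not> W M\<close> ne]
        by (cases p) (simp_all only: if_True if_False)
    qed
  qed
qed

lemma breaker_time_mono_goal:
  assumes "finite V" and "finite B" and "\<And>S. W S \<Longrightarrow> W' S"
  shows "breaker_time W V n M B p \<le> breaker_time W' V n M B p"
  unfolding breaker_time_eq_dual_maker_time using assms by (intro maker_time_antimono_goal) auto

lemma M_val_le_M'_val:
  assumes "finite V"
  shows "M_val W V \<le> M'_val W V"
proof (cases "W {} \<or> V = {}")
  case True
  then show ?thesis unfolding M_val_def M'_val_def by (cases "card V") auto
next
  case False
  then obtain n y where n: "card V = Suc n" and y: "y \<in> V"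
    using assms by (cases "card V") auto
  have "M_val W V \<le> maker_time W V (Suc n) {} {y} True"
    unfolding M_val_def n using assms n by (intro maker_time_mono_breaker_set) auto
  also have "\<dots> = maker_time W V n {} {y} True"
    using assms n y by (intro maker_time_Suc_fuel) auto
  also have "\<dots> \<le> M'_val W V"
    unfolding M'_val_def n using False y assms by (auto simp: Max_ge_iff)
  finally show ?thesis .
qed

lemma B'_val_le_B_val:
  assumes "finite V"
  shows "B'_val W V \<le> B_val W V"
  using M_val_le_M'_val[OF assms, of "\<lambda>S. \<not> W (V - S)"]
  unfolding B_val_def B'_val_def M_val_def M'_val_def breaker_time_eq_dual_maker_time by simp

lemma M_val_le_after_first_move:
  assumes "finite V" and "v \<in> V"
  shows "M_val W V \<le> maker_time W V (card V - 1) {v} {} False"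
proof (cases "W {}")
  case True
  then show ?thesis unfolding M_val_def by (cases "card V") (simp_all add: zero_enat_def [symmetric])
next
  case False
  obtain n where n: "card V = Suc n" using assms card_gt_0_iff by (cases "card V") auto
  have "M_val W V = (MIN u\<in>V. maker_time W V n {u} {} False)"
    unfolding M_val_def n using False assms(2) by auto
  also have "\<dots> \<le> maker_time W V n {v} {} False"
    using assms by (intro Min_le) auto
  finally show ?thesis using n by simp
qed

lemma maker_time_le_moves_if_finite:
  assumes "finite V" and "finite M" and "maker_time W V n M B p \<noteq> \<infinity>"
  shows "maker_time W V n M B p
    \<le> enat (card M + (if p then card (V - (M \<union> B)) + 1 else card (V - (M \<union> B))) div 2)"
  using assms(2,3)
proof (induction n arbitrary: M B p)
  case 0
  then show ?case by (simp split: if_splits)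
next
  case (Suc n)
  let ?F = "V - (M \<union> B)"
  show ?case
  proof (cases "W M")
    case True
    then show ?thesis by simp
  next
    case False
    have ne: "?F \<noteq> {}" and fin: "finite ?F" using Suc.prems False assms(1) by auto
    have card_F: "card (V - insert v (M \<union> B)) = card ?F - 1" if "v \<in> ?F" for v
      using that by simp
    have "card ?F \<ge> 1" using ne fin by (simp add: Suc_le_eq card_gt_0_iff)
    show ?thesis
    proof (cases p)
      case True
      have "(MIN u\<in>?F. maker_time W V n (insert u M) B False) \<in> (\<lambda>u. maker_time W V n (insert u M) B False) ` ?F"
        using fin ne by simp
      then obtain v where "(MIN u\<in>?F. maker_time W V n (insert u M) B False) = maker_time W V n (insert v M) B False"
        and v: "v \<in> ?F" by (rule imageE)
      then have "maker_time W V (Suc n) M B p = maker_time W V n (insert v M) B False"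
        using True False ne by simp
      also have "\<dots> \<le> enat (card (insert v M) + card (V - (insert v M \<union> B)) div 2)"
        using Suc.IH[of "insert v M" B False] Suc.prems calculation by simp
      also have "\<dots> = enat (card M + (card ?F + 1) div 2)"
      proof -
        have "card (insert v M) = card M + 1" using v Suc.prems(1) by simp
        then show ?thesis using card_F[OF v] \<open>card ?F \<ge> 1\<close> by simp
      qed
      finally show ?thesis using True by simp
    next
      case False
      have "maker_time W V n M (insert v B) True \<le> enat (card M + card ?F div 2)" if v: "v \<in> ?F" for v
      proof -
        have "maker_time W V n M (insert v B) True \<le> (MAX u\<in>?F. maker_time W V n M (insert u B) True)"
          using fin v by simp
        moreover have "(MAX u\<in>?F. maker_time W V n M (insert u B) True) = maker_time W V (Suc n) M B p"
          using False \<open>\<not> W M\<close> ne by simp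
        ultimately have "maker_time W V n M (insert v B) True \<noteq> \<infinity>"
          using Suc.prems(2) by (metis enat_ord_simps(5))
        then have "maker_time W V n M (insert v B) True \<le> enat (card M + (card ?F - 1 + 1) div 2)"
          using Suc.IH[of M "insert v B" True] Suc.prems(1) card_F[OF v] by simp
        then show ?thesis using \<open>card ?F \<ge> 1\<close> by simp
      qed
      then show ?thesis using False \<open>\<not> W M\<close> ne fin by simp
    qed
  qed
qed

lemma breaker_time_le_moves_if_finite:
  assumes "finite V" and "finite B" and "breaker_time W V n M B p \<noteq> \<infinity>"
  shows "breaker_time W V n M B p
    \<le> enat (card B + (if p then card (V - (M \<union> B)) else card (V - (M \<union> B)) + 1) div 2)"
  using maker_time_le_moves_if_finite[OF assms(1,2), of "\<lambda>S. \<not> W (V - S)" n M "\<not> p"] assms(3)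
  by (cases p) (simp_all add: breaker_time_eq_dual_maker_time Un_commute)

lemma maker_time_finite_if_maker_wins:
  assumes "finite V"
  shows "maker_wins_from W V n M B p \<Longrightarrow> maker_time W V n M B p \<noteq> \<infinity>"
proof (induction n arbitrary: M B p)
  case 0
  then show ?case by simp
next
  case (Suc n)
  let ?F = "V - (M \<union> B)"
  show ?case
  proof (cases "W M")
    case False
    then have ne: "?F \<noteq> {}" using Suc.prems by auto
    have fin: "finite ?F" using assms by simp
    show ?thesis
    proof (cases p)
      case True
      then obtain v where v: "v \<in> ?F" "maker_wins_from W V n (insert v M) B False"
        using Suc.prems ne by auto
      have "(MIN v\<in>?F. maker_time W V n (insert v M) B False) \<le> maker_time W V n (insert v M) B False"
        using fin v(1) by simp
      moreover have "maker_time W V (Suc n) M B p = (MIN v\<in>?F. maker_time W V n (insert v M) B False)"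
        using True False ne by simp
      ultimately show ?thesis
        using Suc.IH[OF v(2)] by (metis enat_ord_simps(5))
    next
      case False
      then have "maker_wins_from W V n M (insert v B) True" if "v \<in> ?F" for v
        using Suc.prems ne that by auto
      then have "\<forall>t\<in>(\<lambda>v. maker_time W V n M (insert v B) True) ` ?F. t \<noteq> \<infinity>"
        using Suc.IH by blast
      moreover have "(MAX v\<in>?F. maker_time W V n M (insert v B) True) \<in> (\<lambda>v. maker_time W V n M (insert v B) True) ` ?F"
        using fin ne by simp
      ultimately show ?thesis
        using False \<open>\<not> W M\<close> ne by auto
    qed
  qed simp
qed

lemma breaker_time_finite_if_breaker_wins:
  assumes "finite V" and upward_closed: "\<And>S S'. W S \<Longrightarrow> S \<subseteq> S' \<Longrightarrow> S' \<subseteq> V \<Longrightarrow> W S'"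
  shows "M \<subseteq> V \<Longrightarrow> card (V - (M \<union> B)) \<le> n \<Longrightarrow> \<not> maker_wins_from W V n M B p \<Longrightarrow>
    breaker_time W V n M B p \<noteq> \<infinity>"
proof (induction n arbitrary: M B p)
  case 0
  then have "V - B \<subseteq> M" using assms(1) by auto
  then show ?case using 0 upward_closed[of "V - B" M] by auto
next
  case (Suc n)
  let ?F = "V - (M \<union> B)"
  show ?case
  proof (cases "W (V - B)")
    case True
    have ne: "?F \<noteq> {}"
    proof
      assume "?F = {}"
      then have "W M" using True Suc.prems(1) upward_closed[of "V - B" M] by auto
      then show False using Suc.prems(3) \<open>?F = {}\<close> by simp
    qed
    have fin: "finite ?F" using assms(1) by simp
    have fuel: "card (V - insert v (M \<union> B)) \<le> n" if "v \<in> ?F" for v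
      using that Suc.prems(2) fin by simp
    show ?thesis
    proof (cases p)
      case True
      then have "\<not> maker_wins_from W V n (insert v M) B False" if "v \<in> ?F" for v
        using Suc.prems(3) ne that by auto
      then have "\<forall>t\<in>(\<lambda>v. breaker_time W V n (insert v M) B False) ` ?F. t \<noteq> \<infinity>"
        using Suc.IH Suc.prems(1) fuel by auto
      moreover have "(MAX v\<in>?F. breaker_time W V n (insert v M) B False) \<in> (\<lambda>v. breaker_time W V n (insert v M) B False) ` ?F"
        using fin ne by simp
      ultimately show ?thesis
        using True \<open>W (V - B)\<close> ne by auto
    next
      case False
      then obtain v where v: "v \<in> ?F" "\<not> maker_wins_from W V n M (insert v B) True"
        using Suc.prems(3) ne by auto
      have "(MIN v\<in>?F. breaker_time W V n M (insert v B) True) \<le> breaker_time W V n M (insert v B) True"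
        using fin v(1) by simp
      moreover have "breaker_time W V n M (insert v B) True \<noteq> \<infinity>"
        using Suc.IH[OF Suc.prems(1) _ v(2)] fuel[OF v(1)] by simp
      moreover have "breaker_time W V (Suc n) M B p = (MIN v\<in>?F. breaker_time W V n M (insert v B) True)"
        using False \<open>W (V - B)\<close> ne by simp
      ultimately show ?thesis by (metis enat_ord_simps(5))
    qed
  qed simp
qed

lemma M'_val_le_half_if_maker_wins:
  assumes "finite V" and "maker_wins W V False"
  shows "M'_val W V \<le> enat (card V div 2)"
  using maker_time_le_moves_if_finite[OF assms(1) finite.emptyI, where B="{}" and p=False]
    maker_time_finite_if_maker_wins[OF assms(1)] assms(2)
  unfolding M'_val_def maker_wins_def by simp

lemma B_val_le_half_if_breaker_wins:
  assumes "finite V" and "\<And>S S'. W S \<Longrightarrow> S \<subseteq> S' \<Longrightarrow> S' \<subseteq> V \<Longrightarrow> W S'"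
    and "\<not> maker_wins W V True"
  shows "B_val W V \<le> enat (card V div 2)"
proof -
  have "breaker_time W V (card V) {} {} True \<noteq> \<infinity>"
    using breaker_time_finite_if_breaker_wins[where W=W and M="{}" and B="{}" and n="card V" and p=True,
        OF assms(1,2)] assms(3)
    unfolding maker_wins_def by simp
  then show ?thesis
    using breaker_time_le_moves_if_finite[OF assms(1) finite.emptyI, where M="{}" and p=True]
    unfolding B_val_def by simp
qed

section \<open>Pairing strategies\<close>

lemma pair_familyD:
  assumes "pair_family V X"
  shows "finite X" and "P \<in> X \<Longrightarrow> P \<subseteq> V" and "P \<in> X \<Longrightarrow> card P = 2"
    and "P \<in> X \<Longrightarrow> Q \<in> X \<Longrightarrow> P \<noteq> Q \<Longrightarrow> P \<inter> Q = {}"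
  using assms unfolding pair_family_def by auto

lemma card_Union_pair_family:
  assumes "pair_family V X"
  shows "card (\<Union>X) = 2 * card X"
proof -
  note pairs = pair_familyD(3)[OF assms]
  have "card (\<Union>X) = (\<Sum>P\<in>X. card P)"
  proof (rule card_Union_disjoint)
    show "pairwise disjnt X"
      using pair_familyD(4)[OF assms] unfolding pairwise_def disjnt_def by blast
    show "finite P" if "P \<in> X" for P
      using pairs[OF that] by (intro card_ge_0_finite) simp
  qed
  also have "\<dots> = 2 * card X"
    using pairs by simp
  finally show ?thesis .
qed

lemma transversal_within:
  assumes "pair_family V X" and "\<forall>P\<in>X. P \<inter> S \<noteq> {}"
  obtains Z where "Z \<subseteq> S" "transversal X Z"
proof -
  have "\<forall>P\<in>X. \<exists>x. x \<in> P \<inter> S" using assms(2) by blast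
  then obtain pick where pick: "\<And>P. P \<in> X \<Longrightarrow> pick P \<in> P \<inter> S"
    by (metis bchoice)
  have "inj_on pick X"
  proof (rule inj_onI)
    fix P Q assume PQ: "P \<in> X" "Q \<in> X" and "pick P = pick Q"
    then have "pick P \<in> P \<inter> Q" using pick[OF PQ(1)] pick[OF PQ(2)] by simp
    then show "P = Q" using pair_familyD(4)[OF assms(1) PQ] by blast
  qed
  then have "card (pick ` X) = card X" by (rule card_image)
  moreover have "\<forall>P\<in>X. pick ` X \<inter> P \<noteq> {}" using pick by blast
  ultimately have "transversal X (pick ` X)" unfolding transversal_def by blast
  moreover have "pick ` X \<subseteq> S" using pick by blast
  ultimately show ?thesis using that by blast
qed

lemma pair_family_reply:
  assumes "pair_family V X" and "U \<subseteq> X" and "U \<noteq> {}" and "\<forall>P\<in>U. P \<inter> B = {}"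
  obtains Q v where "Q \<in> U" "v \<in> Q" "v \<notin> insert y B" "\<forall>P\<in>U - {Q}. y \<notin> P"
proof -
  have pair: "card Q = 2" if "Q \<in> U" for Q
    using that assms(2) pair_familyD(3)[OF assms(1)] by blast
  show ?thesis
  proof (cases "\<exists>Q\<in>U. y \<in> Q")
    case True
    then obtain Q where Q: "Q \<in> U" "y \<in> Q" by blast
    obtain v where "v \<in> Q" "v \<noteq> y"
      using pair[OF Q(1)] by (auto simp: card_2_iff)
    moreover have "\<forall>P\<in>U - {Q}. y \<notin> P"
      using Q assms(2) pair_familyD(4)[OF assms(1)] by blast
    ultimately show ?thesis using that Q assms(4) by blast
  next
    case False
    obtain Q where Q: "Q \<in> U" using assms(3) by blast
    obtain v where "v \<in> Q"
      using pair[OF Q] by (auto simp: card_2_iff)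
    then show ?thesis using that Q False assms(4) by blast
  qed
qed

lemma maker_time_pairing_strategy:
  assumes "finite V" and X: "pair_family V X"
    and wins: "\<And>S. M0 \<subseteq> S \<Longrightarrow> S \<subseteq> V \<Longrightarrow> \<forall>P\<in>X. P \<inter> S \<noteq> {} \<Longrightarrow> W S"
  shows "M0 \<subseteq> M \<Longrightarrow> M \<subseteq> V \<Longrightarrow> card (V - (M \<union> B)) \<le> n \<Longrightarrow>
    \<forall>P\<in>X. P \<inter> M = {} \<longrightarrow> P \<inter> B = {} \<Longrightarrow>
    maker_time W V n M B False \<le> enat (card M + card {P\<in>X. P \<inter> M = {}})"
proof (induction n arbitrary: M B rule: less_induct)
  case (less n)
  let ?U = "{P\<in>X. P \<inter> M = {}}" and ?F = "V - (M \<union> B)"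
  have finX: "finite X" and pairs: "\<And>P. P \<in> X \<Longrightarrow> P \<subseteq> V \<and> card P = 2"
    and disj: "\<And>P Q. P \<in> X \<Longrightarrow> Q \<in> X \<Longrightarrow> P \<noteq> Q \<Longrightarrow> P \<inter> Q = {}"
    using pair_familyD[OF X] by auto
  show ?case
  proof (cases "W M")
    case True
    then show ?thesis by (cases n) simp_all
  next
    case False
    then have "\<not> (\<forall>P\<in>X. P \<inter> M \<noteq> {})" using wins[of M] less.prems(1,2) by blast
    then obtain P where P: "P \<in> ?U" by blast
    then obtain a where "a \<in> P" using pairs by (force simp: card_2_iff)
    then have "a \<in> ?F" using P pairs less.prems(4) by blast
    then have "0 < card ?F" using assms(1) card_gt_0_iff by blast
    then obtain m where m: "n = Suc m" using less.prems(3) by (cases n) auto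
    have ne: "?F \<noteq> {}" using \<open>a \<in> ?F\<close> by blast
    have "maker_time W V m M (insert y B) True \<le> enat (card M + card ?U)" if y: "y \<in> ?F" for y
    proof -
      have "?U \<subseteq> X" "?U \<noteq> {}" "\<forall>P\<in>?U. P \<inter> B = {}" using P less.prems(4) by auto
      then obtain Q v where Q: "Q \<in> ?U" and v: "v \<in> Q" "v \<notin> insert y B" and others: "\<forall>P\<in>?U - {Q}. y \<notin> P"
        by (rule pair_family_reply[OF X])
      have "v \<in> V - (M \<union> insert y B)" using Q v pairs by blast
      then have "0 < card (V - insert y (M \<union> B))" using assms(1) card_gt_0_iff by auto
      then obtain m' where m': "m = Suc m'" using less.prems(3) m y by (cases m) auto
      have U': "{P\<in>X. P \<inter> insert v M = {}} = ?U - {Q}" using Q v disj by blast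
      have "maker_time W V m M (insert y B) True
          = (MIN u\<in>V - (M \<union> insert y B). maker_time W V m' (insert u M) (insert y B) False)"
        using m' False \<open>v \<in> V - (M \<union> insert y B)\<close> by (simp only: maker_time_Suc_ongoing) auto
      also have "\<dots> \<le> maker_time W V m' (insert v M) (insert y B) False"
        using \<open>v \<in> V - (M \<union> insert y B)\<close> assms(1) by (intro Min_le) auto
      also have "\<dots> \<le> enat (card (insert v M) + card {P\<in>X. P \<inter> insert v M = {}})"
      proof (rule less.IH)
        show "m' < n" using m m' by simp
        show "M0 \<subseteq> insert v M" "insert v M \<subseteq> V" using less.prems(1,2) Q v pairs[of Q] by auto
        have "card (V - insert y (M \<union> B)) = card ?F - 1"
          by (rule card_Diff_insert) (use y in auto)
        moreover have "card (V - insert v (insert y (M \<union> B))) = card (V - insert y (M \<union> B)) - 1"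
          by (rule card_Diff_insert) (use \<open>v \<in> V - (M \<union> insert y B)\<close> in auto)
        moreover have "insert v M \<union> insert y B = insert v (insert y (M \<union> B))" by auto
        ultimately show "card (V - (insert v M \<union> insert y B)) \<le> m'"
          using less.prems(3) m m' by (simp only:)
        show "\<forall>P\<in>X. P \<inter> insert v M = {} \<longrightarrow> P \<inter> insert y B = {}"
        proof (intro ballI impI)
          fix P assume "P \<in> X" "P \<inter> insert v M = {}"
          then have "P \<in> ?U - {Q}" using U' by blast
          then show "P \<inter> insert y B = {}" using others less.prems(4) by blast
        qed
      qed
      also have "\<dots> = enat (card M + card ?U)"
      proof -
        have "v \<notin> M" using v(1) Q by blast
        then have "card (insert v M) = Suc (card M)"
          using finite_subset[OF less.prems(2) assms(1)] by simp
        moreover have "card (?U - {Q}) = card ?U - 1" "card ?U \<ge> 1"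
          using Q finX by (auto simp: card_Diff_singleton Suc_le_eq card_gt_0_iff)
        ultimately show ?thesis using U' by simp
      qed
      finally show ?thesis .
    qed
    then show ?thesis using m False ne assms(1) by simp
  qed
qed

section \<open>Distance-k resolving sets\<close>

lemma res_set_k_upward_closed:
  "res_set_k V E k S \<Longrightarrow> S \<subseteq> S' \<Longrightarrow> S' \<subseteq> V \<Longrightarrow> res_set_k V E k S'"
  unfolding res_set_k_def resolving_wrt_def by blast

lemma res_set_k_Suc:
  assumes "res_set_k V E k S"
  shows "res_set_k V E (k + 1) S"
proof -
  have refine: "min a (k + 1 + 1) \<noteq> min b (k + 1 + 1)" if "min a (k + 1) \<noteq> min b (k + 1)" for a b :: nat
    using that by (simp add: min_def split: if_splits)
  show ?thesis
    using assms refine unfolding res_set_k_def resolving_wrt_def gdist_k_def by meson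
qed

lemma dim_k_le_card:
  assumes "finite V" and "res_set_k V E k S"
  shows "dim_k V E k \<le> card S"
proof -
  have "{card S | S. res_set_k V E k S} \<subseteq> card ` Pow V"
    unfolding res_set_k_def resolving_wrt_def by blast
  then have "finite {card S | S. res_set_k V E k S}"
    using assms(1) finite_subset by blast
  then show ?thesis
    unfolding dim_k_def using assms(2) by (intro Min_le) auto
qed

lemma dim_k_le_maker_time:
  "finite V \<Longrightarrow> enat (dim_k V E k) \<le> maker_time (res_set_k V E k) V n {} B p"
  by (intro le_maker_time dim_k_le_card) auto

lemma gdist_le_diam:
  assumes "finite V" and "x \<in> V" and "y \<in> V"
  shows "gdist E x y \<le> diam V E"
proof -
  have "{gdist E x y | x y. x \<in> V \<and> y \<in> V} = (\<lambda>(x, y). gdist E x y) ` (V \<times> V)" by auto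
  then show ?thesis
    unfolding diam_def using assms by (intro Max_ge) auto
qed

lemma resolving_wrt_cong:
  assumes "\<And>x z. x \<in> V \<Longrightarrow> z \<in> V \<Longrightarrow> d x z = d' x z"
  shows "resolving_wrt d V S \<longleftrightarrow> resolving_wrt d' V S"
proof -
  have "(\<exists>z\<in>S. d x z \<noteq> d y z) \<longleftrightarrow> (\<exists>z\<in>S. d' x z \<noteq> d' y z)" if "S \<subseteq> V" "x \<in> V" "y \<in> V" for x y
    using assms that by (intro bex_cong refl) auto
  then show ?thesis unfolding resolving_wrt_def by auto
qed

lemma res_set_k_eq_res_set:
  assumes "finite V" and "diam V E \<le> k + 1"
  shows "res_set_k V E k = res_set V E"
proof -
  have "gdist_k E k x z = gdist E x z" if "x \<in> V" "z \<in> V" for x z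
    using order.trans[OF gdist_le_diam[OF assms(1) that] assms(2)] unfolding gdist_k_def by simp
  then show ?thesis
    unfolding res_set_k_def res_set_def by (intro ext resolving_wrt_cong)
qed

lemma res_set_k_if_meets_pairing_res:
  assumes "pairing_res V E k X" and "S \<subseteq> V" and "\<forall>P\<in>X. P \<inter> S \<noteq> {}"
  shows "res_set_k V E k S"
proof -
  have X: "pair_family V X" using assms(1) unfolding pairing_res_def by blast
  obtain Z where "Z \<subseteq> S" "transversal X Z" by (rule transversal_within[OF X assms(3)])
  moreover have "Z \<subseteq> V" using \<open>Z \<subseteq> S\<close> assms(2) by blast
  ultimately have "res_set_k V E k Z" using assms(1) unfolding pairing_res_def by blast
  then show ?thesis by (rule res_set_k_upward_closed[OF _ \<open>Z \<subseteq> S\<close> assms(2)])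
qed

lemma res_set_k_if_meets_quasi_pairing_res:
  assumes "quasi_pairing_res V E k X"
  obtains v where "v \<in> V - \<Union>X"
    and "\<And>S. v \<in> S \<Longrightarrow> S \<subseteq> V \<Longrightarrow> \<forall>P\<in>X. P \<inter> S \<noteq> {} \<Longrightarrow> res_set_k V E k S"
proof -
  have X: "pair_family V X"
    using assms unfolding quasi_pairing_res_def by (rule conjunct1)
  have "\<exists>v\<in>V - \<Union>X. \<forall>Z. Z \<subseteq> V \<and> transversal X Z \<longrightarrow> res_set_k V E k (insert v Z)"
    using assms unfolding quasi_pairing_res_def by (rule conjunct2[THEN conjunct2])
  then obtain v where v: "v \<in> V - \<Union>X"
    and extends: "\<And>Z. Z \<subseteq> V \<Longrightarrow> transversal X Z \<Longrightarrow> res_set_k V E k (insert v Z)"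
    by blast
  have "res_set_k V E k S" if S: "v \<in> S" "S \<subseteq> V" "\<forall>P\<in>X. P \<inter> S \<noteq> {}" for S
  proof -
    obtain Z where "Z \<subseteq> S" "transversal X Z" by (rule transversal_within[OF X S(3)])
    then have "res_set_k V E k (insert v Z)" using extends S(2) by blast
    then show ?thesis by (rule res_set_k_upward_closed) (use S \<open>Z \<subseteq> S\<close> in auto)
  qed
  then show ?thesis using that v by blast
qed

section \<open>The game values of the distance-k resolving game\<close>

lemma bounds_if_outcome_M:
  assumes "finite V" and "game_outcome (res_set_k V E k) V = OutM"
  shows "enat (dim_k V E k) \<le> M_val (res_set_k V E k) V
     \<and> M_val (res_set_k V E k) V \<le> M'_val (res_set_k V E k) V
     \<and> M'_val (res_set_k V E k) V \<le> enat (card V div 2)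
     \<and> M_val (res_set_k V E (k + 1)) V \<le> M_val (res_set_k V E k) V
     \<and> M'_val (res_set_k V E (k + 1)) V \<le> M'_val (res_set_k V E k) V"
proof (intro conjI)
  have "maker_wins (res_set_k V E k) V False"
    using assms(2) by (simp add: game_outcome_def split: if_splits)
  then show "M'_val (res_set_k V E k) V \<le> enat (card V div 2)"
    by (rule M'_val_le_half_if_maker_wins[OF assms(1)])
  show "enat (dim_k V E k) \<le> M_val (res_set_k V E k) V"
    unfolding M_val_def by (rule dim_k_le_maker_time[OF assms(1)])
  show "M_val (res_set_k V E k) V \<le> M'_val (res_set_k V E k) V"
    by (rule M_val_le_M'_val[OF assms(1)])
  show "M_val (res_set_k V E (k + 1)) V \<le> M_val (res_set_k V E k) V"
    "M'_val (res_set_k V E (k + 1)) V \<le> M'_val (res_set_k V E k) V"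
    unfolding M_val_def M'_val_def using assms(1) res_set_k_Suc by (auto intro!: maker_time_antimono_goal)
qed

lemma bounds_if_outcome_B:
  assumes "finite V" and "game_outcome (res_set_k V E k) V = OutB"
  shows "B'_val (res_set_k V E k) V \<le> B_val (res_set_k V E k) V
     \<and> B_val (res_set_k V E k) V \<le> enat (card V div 2)
     \<and> (k > 1 \<longrightarrow> B_val (res_set_k V E k) V \<ge> B_val (res_set_k V E (k - 1)) V
                 \<and> B'_val (res_set_k V E k) V \<ge> B'_val (res_set_k V E (k - 1)) V)"
proof (intro conjI impI)
  show "B'_val (res_set_k V E k) V \<le> B_val (res_set_k V E k) V"
    by (rule B'_val_le_B_val[OF assms(1)])
  show "B_val (res_set_k V E k) V \<le> enat (card V div 2)"
  proof (rule B_val_le_half_if_breaker_wins[OF assms(1)])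
    show "\<not> maker_wins (res_set_k V E k) V True"
      using assms(2) by (simp add: game_outcome_def split: if_splits)
  qed (rule res_set_k_upward_closed)
  assume "k > 1"
  then have "res_set_k V E k S" if "res_set_k V E (k - 1) S" for S
    using res_set_k_Suc[OF that] by simp
  then show "B_val (res_set_k V E k) V \<ge> B_val (res_set_k V E (k - 1)) V"
    "B'_val (res_set_k V E k) V \<ge> B'_val (res_set_k V E (k - 1)) V"
    unfolding B_val_def B'_val_def using assms(1) by (auto intro!: breaker_time_mono_goal)
qed

lemma M_vals_eq_dim_k_if_pairing_res:
  assumes "finite V" and "pairing_res V E k X" and "card (\<Union>X) = 2 * dim_k V E k"
  shows "M_val (res_set_k V E k) V = enat (dim_k V E k)
    \<and> M'_val (res_set_k V E k) V = enat (dim_k V E k)"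
proof -
  have X: "pair_family V X" using assms(2) unfolding pairing_res_def by blast
  then have "card X = dim_k V E k" using assms(3) card_Union_pair_family[OF X] by simp
  then have "M'_val (res_set_k V E k) V \<le> enat (dim_k V E k)"
    using maker_time_pairing_strategy[OF assms(1) X res_set_k_if_meets_pairing_res[OF assms(2)],
        where M0="{}" and M="{}" and B="{}" and n="card V"]
    unfolding M'_val_def by simp
  moreover have "enat (dim_k V E k) \<le> M_val (res_set_k V E k) V"
    unfolding M_val_def by (rule dim_k_le_maker_time[OF assms(1)])
  ultimately show ?thesis
    using M_val_le_M'_val[OF assms(1), of "res_set_k V E k"] by (meson antisym order.trans)
qed

lemma N_val_eq_dim_k_if_quasi_pairing_res:
  assumes "finite V" and "quasi_pairing_res V E k X" and "card (\<Union>X) = 2 * (dim_k V E k - 1)"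
  shows "N_val (res_set_k V E k) V = enat (dim_k V E k)"
proof -
  have X: "pair_family V X"
    using assms(2) unfolding quasi_pairing_res_def by (rule conjunct1)
  obtain v where v: "v \<in> V - \<Union>X"
    and wins: "\<And>S. v \<in> S \<Longrightarrow> S \<subseteq> V \<Longrightarrow> \<forall>P\<in>X. P \<inter> S \<noteq> {} \<Longrightarrow> res_set_k V E k S"
    using res_set_k_if_meets_quasi_pairing_res[OF assms(2)] by blast
  have "maker_time (res_set_k V E k) V (card V - 1) {v} {} False
      \<le> enat (card {v} + card {P\<in>X. P \<inter> {v} = {}})"
  proof (rule maker_time_pairing_strategy[where M0="{v}", OF assms(1) X])
    show "res_set_k V E k S" if "{v} \<subseteq> S" "S \<subseteq> V" "\<forall>P\<in>X. P \<inter> S \<noteq> {}" for S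
      using wins that by blast
    show "card (V - ({v} \<union> {})) \<le> card V - 1" using v assms(1) by simp
  qed (use v in auto)
  also have "\<dots> = enat (dim_k V E k)"
  proof -
    have "{P\<in>X. P \<inter> {v} = {}} = X" using v by blast
    moreover have "card X = dim_k V E k - 1" "card X \<ge> 1"
      using assms(3) card_Union_pair_family[OF X] X unfolding pair_family_def by simp_all
    ultimately show ?thesis by simp
  qed
  finally have "maker_time (res_set_k V E k) V (card V - 1) {v} {} False \<le> enat (dim_k V E k)" .
  then have "N_val (res_set_k V E k) V \<le> enat (dim_k V E k)"
    using M_val_le_after_first_move[OF assms(1), of v "res_set_k V E k"] v
    unfolding N_val_def M_val_def by simp
  moreover have "enat (dim_k V E k) \<le> N_val (res_set_k V E k) V"
    unfolding N_val_def by (rule dim_k_le_maker_time[OF assms(1)])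
  ultimately show ?thesis by simp
qed

theorem mainTheorem8:
  fixes V :: "'a set" and E :: "'a \<Rightarrow> 'a \<Rightarrow> bool" and k :: nat
  assumes "simple_graph V E" and "connected_graph V E" and "card V \<ge> 2" and "k \<ge> 1"
  shows
   "(game_outcome (res_set_k V E k) V = OutM \<longrightarrow>
       enat (dim_k V E k) \<le> M_val (res_set_k V E k) V
     \<and> M_val (res_set_k V E k) V \<le> M'_val (res_set_k V E k) V
     \<and> M'_val (res_set_k V E k) V \<le> enat (card V div 2)
     \<and> M_val (res_set_k V E (k + 1)) V \<le> M_val (res_set_k V E k) V
     \<and> M'_val (res_set_k V E (k + 1)) V \<le> M'_val (res_set_k V E k) V)
  \<and> (game_outcome (res_set_k V E k) V = OutB \<longrightarrow>
       B'_val (res_set_k V E k) V \<le> B_val (res_set_k V E k) V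
     \<and> B_val (res_set_k V E k) V \<le> enat (card V div 2)
     \<and> (k > 1 \<longrightarrow> B_val (res_set_k V E k) V \<ge> B_val (res_set_k V E (k - 1)) V
                 \<and> B'_val (res_set_k V E k) V \<ge> B'_val (res_set_k V E (k - 1)) V))
  \<and> ((diam V E \<in> {1, 2} \<or> k \<ge> diam V E - 1) \<longrightarrow>
       (game_outcome (res_set V E) V = OutM \<longrightarrow>
          M_val (res_set_k V E k) V = M_val (res_set V E) V
        \<and> M'_val (res_set_k V E k) V = M'_val (res_set V E) V)
     \<and> (game_outcome (res_set V E) V = OutB \<longrightarrow>
          B_val (res_set_k V E k) V = B_val (res_set V E) V
        \<and> B'_val (res_set_k V E k) V = B'_val (res_set V E) V))
  \<and> (\<forall>X. pairing_res V E k X \<and> card (\<Union>X) = 2 * dim_k V E k \<longrightarrow>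
       M_val (res_set_k V E k) V = enat (dim_k V E k)
     \<and> M'_val (res_set_k V E k) V = enat (dim_k V E k))
  \<and> (\<forall>X. quasi_pairing_res V E k X \<and> card (\<Union>X) = 2 * (dim_k V E k - 1)
        \<and> game_outcome (res_set_k V E k) V = OutN \<longrightarrow>
       N_val (res_set_k V E k) V = enat (dim_k V E k))"
proof -
  have fin: "finite V" using assms(1) unfolding simple_graph_def by blast
  have "res_set_k V E k = res_set V E" if "diam V E \<in> {1, 2} \<or> k \<ge> diam V E - 1"
    using res_set_k_eq_res_set[OF fin] that assms(4) by auto
  then show ?thesis
    using bounds_if_outcome_M[OF fin] bounds_if_outcome_B[OF fin]
      M_vals_eq_dim_k_if_pairing_res[OF fin] N_val_eq_dim_k_if_quasi_pairing_res[OF fin]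
    by (intro conjI impI allI; (elim conjE)?; simp)
qed

end
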